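(* In the DS-Sync setting, assume: (i) $F$ is $L$-smooth; (ii) $F$ is $\mu$-strongly convex with minimizer $w^*$; (iii) $\mathbb{E}\,|\nabla F(w_t^k,\xi_t^k)-\nabla F(w_t^k)|^2\le\sigma^2$ for all $t,k$; (iv) $\mathbb{E}\,|\nabla F(w_t^k,\xi_t^k)|^2\le G^2$ for all $t,k$. Let $\kappa=L/\mu$, $\gamma=\max(8\kappa,2)$, and use learning rates $\eta_t=\frac{2}{\mu(\gamma+t)}$. For $t\ge0$ let $\bar w_t=\frac1N\sum_{k\in\mathcal{G}}w_t^k$, where $\mathcal{G}$ is any block of the partition $P_{t\bmod 2}$. Then for all $t\ge0$, $$\mathbb{E}[F(\bar w_t)]-F(w^* )\le\frac{2\kappa}{\gamma+t}\Big(\frac{B}{\mu}+2L\,|w_0-w^*|^2\Big),\qquad\text{where } B=\frac{\sigma^2}{N}+8G^2.$$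
   Context: DS-Sync setting. Let $N\ge1$ be an integer and $W=N^2$ workers indexed by $m\in\{0,\dots,W-1\}$. Two partitions of the workers into $N$ blocks of size $N$: $P_0$ with blocks $\{m:\lfloor m/N\rfloor=a\}$, and $P_1$ with blocks $\{m: m \bmod N=b\}$. For $s\ge0$ let $\mathcal{G}_s(m)$ denote the block of $P_{s \bmod 2}$ containing $m$. $F:\mathbb{R}^d\to\mathbb{R}$ is differentiable with stochastic gradient oracle $\nabla F(w,\xi)$. All workers start at $w_0^m=w_0$. For $t=0,1,2,\dots$, worker $m$ draws $\xi_t^m$, sets $v_{t+1}^m=w_t^m-\eta_t\nabla F(w_t^m,\xi_t^m)$, then $w_{t+1}^m=\frac1N\sum_{j\in\mathcal{G}_t(m)}v_{t+1}^j$. Let $\mathcal{F}_t$ be the $\sigma$-algebra generated by all $\xi_s^m$, $s<t$; conditionally on $\mathcal{F}_t$, the $\xi_t^m$ are independent across $m$, and $\mathbb{E}[\nabla F(w_t^m,\xi_t^m)\mid\mathcal{F}_t]=\nabla F(w_t^m)$. $L$-smooth: $F(v)\le F(w)+(v-w)^T\nabla F(w)+\frac L2|v-w|^2$ for all $v,w$. $\mu$-strongly convex: $F(v)\ge F(w)+(v-w)^T\nabla F(w)+\frac\mu2|v-w|^2$ for all $v,w$. $|\cdot|$ is the Euclidean norm. *)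

theory Defs
  imports "HOL-Probability.Probability"
begin

text \<open>Block of worker m in the partition P_(s mod 2), with W = N^2 workers.\<close>
definition ds_block :: "nat \<Rightarrow> nat \<Rightarrow> nat \<Rightarrow> nat set" where
  "ds_block N s m =
     (if even s then {j. j < N^2 \<and> j div N = m div N}
      else {j. j < N^2 \<and> j mod N = m mod N})"

fun ds_iter :: "nat \<Rightarrow> ('a::real_vector \<Rightarrow> 'b \<Rightarrow> 'a) \<Rightarrow> (nat \<Rightarrow> real) \<Rightarrow> 'a
               \<Rightarrow> (nat \<Rightarrow> nat \<Rightarrow> 'p \<Rightarrow> 'b) \<Rightarrow> nat \<Rightarrow> nat \<Rightarrow> 'p \<Rightarrow> 'a" where
  "ds_iter N g eta w0 xi 0 m \<omega> = w0"
| "ds_iter N g eta w0 xi (Suc t) m \<omega> =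
     (1 / real N) *\<^sub>R (\<Sum>j\<in>ds_block N t m.
        ds_iter N g eta w0 xi t j \<omega> - eta t *\<^sub>R g (ds_iter N g eta w0 xi t j \<omega>) (xi t j \<omega>))"

definition ds_filt :: "'p measure \<Rightarrow> 'b measure \<Rightarrow> nat \<Rightarrow> (nat \<Rightarrow> nat \<Rightarrow> 'p \<Rightarrow> 'b) \<Rightarrow> nat \<Rightarrow> 'p measure" where
  "ds_filt M S N xi t = sigma (space M)
     (\<Union>s<t. \<Union>m<N^2. {xi s m -` A \<inter> space M | A. A \<in> sets S})"

definition cond_indep_vars :: "'p measure \<Rightarrow> 'p measure \<Rightarrow> 'b measure \<Rightarrow> 'i set \<Rightarrow> ('i \<Rightarrow> 'p \<Rightarrow> 'b) \<Rightarrow> bool" where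
  "cond_indep_vars M Fs S I X \<longleftrightarrow>
     (\<forall>A. (\<forall>i\<in>I. A i \<in> sets S) \<longrightarrow>
        (AE \<omega> in M. real_cond_exp M Fs (indicator (\<Inter>i\<in>I. X i -` A i \<inter> space M)) \<omega>
                    = (\<Prod>i\<in>I. real_cond_exp M Fs (indicator (X i -` A i \<inter> space M)) \<omega>)))"

end

theory Submission
  imports Defs
begin

text \<open>The two partitions are the rows and the columns of an \<open>N \<times> N\<close> grid of workers, so a row
  average followed by a column average (or vice versa) is the average over all workers. Hence every
  block average at time \<open>t\<close> is the global average of the iterates, and this global average performs
  SGD with the averaged stochastic gradient. Its expected squared distance to \<open>w\<^sup>*\<close> contracts by
  \<open>1 - \<mu> \<eta>\<^sub>t\<close> up to a noise term \<open>\<eta>\<^sub>t\<^sup>2 G\<^sup>2\<close> and a term \<open>\<eta>\<^sub>t L\<close> times the consensus error (the spread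
  of the workers around their average); one gossip step leaves a consensus error of order
  \<open>\<eta>\<^sup>2 G\<^sup>2\<close>. With \<open>\<eta>\<^sub>t = 2 / (\<mu> (\<gamma> + t))\<close> induction bounds the expected squared distance by
  \<open>O(1 / (\<gamma> + t))\<close>, and \<open>L\<close>-smoothness turns this into the bound on the suboptimality.\<close>

section \<open>The row and column partitions\<close>

lemma ds_block_subset: "ds_block N t m \<subseteq> {..<N^2}"
  by (auto simp: ds_block_def)

lemma finite_ds_block [simp]: "finite (ds_block N t m)"
  using ds_block_subset by (rule finite_subset) simp

lemma ds_block_sym: "m < N^2 \<Longrightarrow> j \<in> ds_block N t m \<longleftrightarrow> j < N^2 \<and> m \<in> ds_block N t j"
  by (auto simp: ds_block_def)

lemma grid_index_less:
  assumes "a < N" "b < N" shows "a * N + b < (N::nat)^2"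
proof -
  have "a * N + b < (a + 1) * N" using assms by simp
  also have "\<dots> \<le> N * N" using assms by (intro mult_right_mono) auto
  finally show ?thesis by (simp add: power2_eq_square)
qed

lemma div_mod_less_square:
  assumes "j < (N::nat)^2" shows "j div N < N" "j mod N < N"
proof -
  have "N > 0" using assms by (cases N) auto
  then show "j div N < N" "j mod N < N"
    using assms by (simp_all add: power2_eq_square less_mult_imp_div_less)
qed

lemma ds_block_Suc_Int_ds_block:
  assumes "m < N^2" "j < N^2"
  shows "ds_block N (Suc t) m \<inter> ds_block N t j
           = {if even t then j div N * N + m mod N else m div N * N + j mod N}"
proof -
  have N: "N > 0" using assms by (cases N) auto
  note lt = div_mod_less_square[OF assms(1)] div_mod_less_square[OF assms(2)]
  have k: "k = k div N * N + k mod N" for k :: nat by simp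
  show ?thesis
  proof (cases "even t")
    case True
    then show ?thesis using N lt grid_index_less[of "j div N" N "m mod N"]
      by (auto simp: ds_block_def) (metis k)
  next
    case False
    then show ?thesis using N lt grid_index_less[of "m div N" N "j mod N"]
      by (auto simp: ds_block_def) (metis k)
  qed
qed

lemma card_ds_block:
  assumes "m < N^2" shows "card (ds_block N t m) = N"
proof -
  have N: "N > 0" using assms by (cases N) auto
  note lt = div_mod_less_square[OF assms]
  have k: "k = k div N * N + k mod N" for k :: nat by simp
  show ?thesis
  proof (cases "even t")
    case True
    then have "ds_block N t m = (\<lambda>b. m div N * N + b) ` {..<N}"
      using N lt grid_index_less[OF lt(1)] by (auto simp: ds_block_def image_iff) (metis N k lessThan_iff mod_less_divisor)
    then show ?thesis by (simp add: card_image inj_on_def)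
  next
    case False
    then have "ds_block N t m = (\<lambda>a. a * N + m mod N) ` {..<N}"
      using N lt grid_index_less[OF _ lt(2)] by (auto simp: ds_block_def image_iff power2_eq_square)
        (metis N k lessThan_iff less_mult_imp_div_less)
    then show ?thesis using N by (simp add: card_image inj_on_def)
  qed
qed

lemma sum_ds_block_restrict:
  "(\<Sum>j\<in>ds_block N t m. f j) = (\<Sum>j\<in>{j\<in>{..<N^2}. j \<in> ds_block N t m}. f j)"
  using ds_block_subset by (intro sum.cong) auto

lemma sum_sum_ds_block:
  fixes f :: "nat \<Rightarrow> 'a::real_vector"
  shows "(\<Sum>m<N^2. \<Sum>j\<in>ds_block N t m. f j) = real N *\<^sub>R (\<Sum>j<N^2. f j)"
proof -
  have "(\<Sum>m<N^2. \<Sum>j\<in>ds_block N t m. f j) = (\<Sum>j<N^2. \<Sum>m\<in>{m\<in>{..<N^2}. j \<in> ds_block N t m}. f j)"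
    unfolding sum_ds_block_restrict by (rule sum.swap_restrict) auto
  also have "\<dots> = (\<Sum>j<N^2. \<Sum>m\<in>ds_block N t j. f j)"
    using ds_block_sym by (intro sum.cong) (auto simp: sum_ds_block_restrict)
  also have "\<dots> = (\<Sum>j<N^2. real N *\<^sub>R f j)"
    by (intro sum.cong) (simp_all add: card_ds_block sum_constant_scaleR)
  finally show ?thesis by (simp add: scaleR_sum_right)
qed

lemma sum_ds_block_Suc_sum_ds_block:
  fixes f :: "nat \<Rightarrow> 'a::comm_monoid_add"
  assumes "m < N^2"
  shows "(\<Sum>k\<in>ds_block N (Suc t) m. \<Sum>j\<in>ds_block N t k. f j) = (\<Sum>j<N^2. f j)"
proof -
  have "(\<Sum>k\<in>ds_block N (Suc t) m. \<Sum>j\<in>ds_block N t k. f j)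
      = (\<Sum>j<N^2. \<Sum>k\<in>{k\<in>ds_block N (Suc t) m. j \<in> ds_block N t k}. f j)"
    unfolding sum_ds_block_restrict[where t=t]
    by (intro sum.swap_restrict) simp_all
  also have "\<dots> = (\<Sum>j<N^2. \<Sum>k\<in>ds_block N (Suc t) m \<inter> ds_block N t j. f j)"
    using assms ds_block_subset ds_block_sym by (intro sum.cong) blast+
  also have "\<dots> = (\<Sum>j<N^2. f j)"
    using assms by (simp add: ds_block_Suc_Int_ds_block)
  finally show ?thesis .
qed

section \<open>Averages in inner product spaces\<close>

lemma norm_add_sq_le: "(norm (x + y))^2 \<le> 2 * (norm x)^2 + 2 * (norm (y::'a::real_inner))^2"
proof -
  have "0 \<le> (norm (x - y))^2" by simp
  then show ?thesis
    by (simp add: power2_norm_eq_inner inner_add_left inner_add_right inner_diff_left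
        inner_diff_right inner_commute)
qed

lemma norm_diff_scaleR_sq:
  "(norm (x - c *\<^sub>R v))^2 = (norm x)^2 - 2 * c * (x \<bullet> v) + c^2 * (norm (v::'a::real_inner))^2"
  unfolding power2_norm_eq_inner
  by (simp add: inner_diff_left inner_diff_right inner_commute power2_eq_square algebra_simps)

lemma norm_avg_diff_sq_le:
  fixes y :: "'i \<Rightarrow> 'a::real_inner"
  assumes "finite I" "I \<noteq> {}"
  shows "(norm ((1 / real (card I)) *\<^sub>R (\<Sum>i\<in>I. y i) - c))^2
           \<le> (1 / real (card I)) * (\<Sum>i\<in>I. (norm (y i - c))^2)"
proof -
  define n where "n = real (card I)"
  define yb where "yb = (1 / n) *\<^sub>R (\<Sum>i\<in>I. y i)"
  have n: "n > 0" using assms by (simp add: n_def card_gt_0_iff)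
  have "(\<Sum>i\<in>I. y i - yb) = 0"
    using n by (simp add: sum_subtractf sum_constant_scaleR yb_def n_def)
  then have centred: "(\<Sum>i\<in>I. (y i - yb) \<bullet> (yb - c)) = 0"
    by (simp add: inner_sum_left[symmetric])
  have "(\<Sum>i\<in>I. (norm (y i - c))^2)
      = (\<Sum>i\<in>I. (norm (y i - yb))^2 + 2 * ((y i - yb) \<bullet> (yb - c)) + (norm (yb - c))^2)"
  proof (intro sum.cong refl)
    fix i
    have "y i - c = (y i - yb) + (yb - c)" by simp
    then show "(norm (y i - c))^2
        = (norm (y i - yb))^2 + 2 * ((y i - yb) \<bullet> (yb - c)) + (norm (yb - c))^2"
      by (simp only: power2_norm_eq_inner inner_add_left inner_add_right inner_commute)
  qed
  also have "\<dots> = (\<Sum>i\<in>I. (norm (y i - yb))^2) + n * (norm (yb - c))^2"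
    by (simp add: sum.distrib sum_distrib_left[symmetric] centred n_def)
  finally have "n * (norm (yb - c))^2 \<le> (\<Sum>i\<in>I. (norm (y i - c))^2)"
    by (simp add: sum_nonneg)
  then show ?thesis using n by (simp add: yb_def n_def field_simps)
qed

section \<open>The iterates and their average\<close>

locale ds_scheme =
  fixes N :: nat and g :: "'a::real_inner \<Rightarrow> 'b \<Rightarrow> 'a" and eta :: "nat \<Rightarrow> real"
    and w0 :: 'a and xi :: "nat \<Rightarrow> nat \<Rightarrow> 'p \<Rightarrow> 'b"
  assumes N_pos: "N \<ge> 1"
begin

abbreviation "w t m \<equiv> ds_iter N g eta w0 xi t m"
abbreviation "sgrad t m \<omega> \<equiv> g (w t m \<omega>) (xi t m \<omega>)"

definition "wavg t \<omega> = (1 / real (N^2)) *\<^sub>R (\<Sum>m<N^2. w t m \<omega>)"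
definition "gavg t \<omega> = (1 / real (N^2)) *\<^sub>R (\<Sum>m<N^2. sgrad t m \<omega>)"

lemma wavg_0: "wavg 0 \<omega> = w0"
  using N_pos by (simp add: wavg_def sum_constant_scaleR)

lemma wavg_Suc_eq_avg_step:
  "wavg (Suc t) \<omega> = (1 / real (N^2)) *\<^sub>R (\<Sum>j<N^2. w t j \<omega> - eta t *\<^sub>R sgrad t j \<omega>)"
proof -
  have "(\<Sum>m<N^2. w (Suc t) m \<omega>)
      = (1 / real N) *\<^sub>R (\<Sum>m<N^2. \<Sum>j\<in>ds_block N t m. w t j \<omega> - eta t *\<^sub>R sgrad t j \<omega>)"
    by (simp add: scaleR_sum_right)
  also have "\<dots> = (\<Sum>j<N^2. w t j \<omega> - eta t *\<^sub>R sgrad t j \<omega>)"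
    using N_pos by (simp only: sum_sum_ds_block) simp
  finally show ?thesis by (simp add: wavg_def)
qed

lemma block_avg_Suc_eq_avg_step:
  assumes "m < N^2"
  shows "(1 / real N) *\<^sub>R (\<Sum>k\<in>ds_block N (Suc t) m. w (Suc t) k \<omega>)
           = (1 / real (N^2)) *\<^sub>R (\<Sum>j<N^2. w t j \<omega> - eta t *\<^sub>R sgrad t j \<omega>)"
  using assms by (simp add: scaleR_sum_right[symmetric] sum_ds_block_Suc_sum_ds_block power2_eq_square)

lemma block_avg_eq_wavg:
  assumes "m < N^2"
  shows "(1 / real N) *\<^sub>R (\<Sum>k\<in>ds_block N t m. w t k \<omega>) = wavg t \<omega>"
proof (cases t)
  case 0
  then show ?thesis using assms N_pos by (simp add: wavg_0 card_ds_block sum_constant_scaleR)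
next
  case (Suc s)
  then show ?thesis using assms by (simp only: block_avg_Suc_eq_avg_step wavg_Suc_eq_avg_step)
qed

lemma wavg_Suc: "wavg (Suc t) \<omega> = wavg t \<omega> - eta t *\<^sub>R gavg t \<omega>"
  unfolding wavg_Suc_eq_avg_step
  by (simp add: wavg_def gavg_def sum_subtractf scaleR_diff_right scaleR_sum_right[symmetric])

lemma w_Suc:
  assumes "m < N^2"
  shows "w (Suc t) m \<omega> = wavg t \<omega> - eta t *\<^sub>R ((1 / real N) *\<^sub>R (\<Sum>j\<in>ds_block N t m. sgrad t j \<omega>))"
  using block_avg_eq_wavg[OF assms, of t \<omega>, symmetric]
  by (simp add: sum_subtractf scaleR_diff_right scaleR_sum_right[symmetric])

definition "consensus t \<omega> = (1 / real (N^2)) * (\<Sum>m<N^2. (norm (wavg t \<omega> - w t m \<omega>))^2)"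
definition "sgrad_sq_avg t \<omega> = (1 / real (N^2)) * (\<Sum>m<N^2. (norm (sgrad t m \<omega>))^2)"

lemma consensus_0: "consensus 0 \<omega> = 0"
  by (simp add: consensus_def wavg_0)

lemma norm_gavg_sq_le: "(norm (gavg t \<omega>))^2 \<le> sgrad_sq_avg t \<omega>"
proof -
  have "0 \<in> {..<N^2}" using N_pos by simp
  then have "{..<N^2} \<noteq> {}" by blast
  then show ?thesis
    using norm_avg_diff_sq_le[of "{..<N^2}" "\<lambda>m. sgrad t m \<omega>" 0] by (simp add: gavg_def sgrad_sq_avg_def)
qed

lemma avg_block_sgrad_sq_avg:
  "(1 / real (N^2)) * (\<Sum>m<N^2. (1 / real N) * (\<Sum>j\<in>ds_block N t m. (norm (sgrad t j \<omega>))^2))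
     = sgrad_sq_avg t \<omega>"
proof -
  have "(\<Sum>m<N^2. (1 / real N) * (\<Sum>j\<in>ds_block N t m. (norm (sgrad t j \<omega>))^2))
      = (1 / real N) * (\<Sum>m<N^2. \<Sum>j\<in>ds_block N t m. (norm (sgrad t j \<omega>))^2)"
    by (simp add: sum_distrib_left)
  also have "\<dots> = (\<Sum>j<N^2. (norm (sgrad t j \<omega>))^2)"
    using N_pos by (simp only: sum_sum_ds_block) simp
  finally show ?thesis by (simp add: sgrad_sq_avg_def)
qed

lemma norm_wavg_diff_w_Suc_sq_le:
  assumes m: "m < N^2"
  shows "(norm (wavg (Suc t) \<omega> - w (Suc t) m \<omega>))^2
           \<le> (eta t)^2 * (2 * ((1 / real N) * (\<Sum>j\<in>ds_block N t m. (norm (sgrad t j \<omega>))^2))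
                          + 2 * sgrad_sq_avg t \<omega>)"
proof -
  define gb where "gb = (1 / real N) *\<^sub>R (\<Sum>j\<in>ds_block N t m. sgrad t j \<omega>)"
  have "wavg (Suc t) \<omega> - w (Suc t) m \<omega> = eta t *\<^sub>R (gb + - gavg t \<omega>)"
    unfolding wavg_Suc w_Suc[OF m] gb_def by (simp add: algebra_simps)
  then have "(norm (wavg (Suc t) \<omega> - w (Suc t) m \<omega>))^2 = (eta t)^2 * (norm (gb + - gavg t \<omega>))^2"
    by (simp add: power_mult_distrib)
  also have "\<dots> \<le> (eta t)^2 * (2 * (norm gb)^2 + 2 * (norm (gavg t \<omega>))^2)"
    using norm_add_sq_le[of gb "- gavg t \<omega>"] by (intro mult_left_mono) auto
  also have "\<dots> \<le> (eta t)^2 * (2 * ((1 / real N) * (\<Sum>j\<in>ds_block N t m. (norm (sgrad t j \<omega>))^2))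
                                + 2 * sgrad_sq_avg t \<omega>)"
proof -
    have "ds_block N t m \<noteq> {}" using card_ds_block[OF m, of t] N_pos by auto
    then show ?thesis
      using card_ds_block[OF m, of t] norm_gavg_sq_le[of t \<omega>]
        norm_avg_diff_sq_le[OF finite_ds_block, of N t m "\<lambda>j. sgrad t j \<omega>" 0]
      by (intro mult_left_mono add_mono) (auto simp: gb_def)
  qed
  finally show ?thesis .
qed

lemma consensus_Suc_le: "consensus (Suc t) \<omega> \<le> 4 * (eta t)^2 * sgrad_sq_avg t \<omega>"
proof -
  define q where "q m = (1 / real N) * (\<Sum>j\<in>ds_block N t m. (norm (sgrad t j \<omega>))^2)" for m
  have "consensus (Suc t) \<omega> \<le> (1 / real (N^2)) * (\<Sum>m<N^2. (eta t)^2 * (2 * q m + 2 * sgrad_sq_avg t \<omega>))"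
    unfolding consensus_def q_def by (intro mult_left_mono sum_mono norm_wavg_diff_w_Suc_sq_le) auto
  also have "\<dots> = 2 * (eta t)^2 * ((1 / real (N^2)) * (\<Sum>m<N^2. q m)) + 2 * (eta t)^2 * sgrad_sq_avg t \<omega>"
proof -
    have "(\<Sum>m<N^2. (eta t)^2 * (2 * q m + 2 * sgrad_sq_avg t \<omega>))
        = 2 * (eta t)^2 * (\<Sum>m<N^2. q m) + real (N^2) * (2 * (eta t)^2 * sgrad_sq_avg t \<omega>)"
      by (simp add: sum.distrib sum_distrib_left algebra_simps)
    then show ?thesis using N_pos by (simp add: field_simps)
  qed
  also have "\<dots> = 4 * (eta t)^2 * sgrad_sq_avg t \<omega>"
    using avg_block_sgrad_sq_avg[of t \<omega>] by (simp add: q_def)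
  finally show ?thesis .
qed

end

section \<open>Smooth strongly convex functions\<close>

locale smooth_strongly_convex =
  fixes F :: "'a::euclidean_space \<Rightarrow> real" and F' :: "'a \<Rightarrow> 'a" and L \<mu> :: real and wstar :: 'a
  assumes smooth: "\<And>v w. F v \<le> F w + (v - w) \<bullet> F' w + L / 2 * (norm (v - w))^2"
    and mu_pos: "\<mu> > 0"
    and strongly_convex: "\<And>v w. F v \<ge> F w + (v - w) \<bullet> F' w + \<mu> / 2 * (norm (v - w))^2"
    and minimizer: "\<And>w. F wstar \<le> F w"
begin

lemma mu_le_L: "\<mu> \<le> L"
proof -
  obtain b :: 'a where b: "b \<in> Basis" using nonempty_Basis by blast
  have "\<mu> / 2 * (norm b)^2 \<le> L / 2 * (norm b)^2"
    using smooth[where v=b and w=0] strongly_convex[where v=b and w=0] by simp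
  then show ?thesis using b by simp
qed

lemma L_pos: "L > 0"
  using mu_le_L mu_pos by simp

text \<open>A gradient step of length \<open>1/L\<close> decreases \<open>F\<close> by at least \<open>|F' x|\<^sup>2 / (2L)\<close>.\<close>
lemma norm_grad_sq_le_suboptimality: "(norm (F' x))^2 \<le> 2 * L * (F x - F wstar)"
proof -
  define y where "y = x - (1 / L) *\<^sub>R F' x"
  have "F wstar \<le> F y" by (rule minimizer)
  also have "F y \<le> F x + (y - x) \<bullet> F' x + L / 2 * (norm (y - x))^2" by (rule smooth)
  also have "\<dots> = F x - (norm (F' x))^2 / (2 * L)"
    unfolding power2_norm_eq_inner using L_pos by (simp add: y_def field_simps)
  finally show ?thesis using L_pos by (simp add: field_simps)
qed

lemma grad_minimizer: "F' wstar = 0"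
  using norm_grad_sq_le_suboptimality[of wstar] by simp

lemma suboptimality_le: "F x - F wstar \<le> L / 2 * (norm (x - wstar))^2"
  using smooth[of x wstar] by (simp add: grad_minimizer)

lemma grad_lipschitz: "norm (F' y - F' x) \<le> L * norm (y - x)"
proof -
  define d where "d = F' y - F' x"
  define z where "z = y - (1 / L) *\<^sub>R d"
  have "F z \<le> F y + (z - y) \<bullet> F' y + L / 2 * (norm (z - y))^2" by (rule smooth)
  moreover have "F z \<ge> F x + (z - x) \<bullet> F' x"
proof -
    have "0 \<le> \<mu> / 2 * (norm (z - x))^2" using mu_pos by simp
    then show ?thesis using strongly_convex[where v=z and w=x] by linarith
  qed
  moreover have "F y \<le> F x + (y - x) \<bullet> F' x + L / 2 * (norm (y - x))^2" by (rule smooth)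
  moreover have "(z - y) \<bullet> F' y - (z - x) \<bullet> F' x + (y - x) \<bullet> F' x = - ((norm d)^2 / L)"
    by (simp add: z_def d_def inner_diff_left inner_diff_right power2_norm_eq_inner
        add_divide_distrib diff_divide_distrib inner_commute)
  moreover have "L / 2 * (norm (z - y))^2 = L / 2 * ((norm d)^2 / L^2)"
    by (simp add: z_def power_divide)
  ultimately have "(norm d)^2 / L - L / 2 * ((norm d)^2 / L^2) \<le> L / 2 * (norm (y - x))^2"
    by linarith
  then have "(norm d)^2 \<le> (L * norm (y - x))^2"
    using L_pos by (simp add: field_simps power2_eq_square)
  then show ?thesis
    using L_pos unfolding d_def by (auto intro: power2_le_imp_le)
qed

lemma norm_grad_le: "norm (F' x) \<le> L * norm (x - wstar)"
  using grad_lipschitz[of x wstar] by (simp add: grad_minimizer)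

lemma borel_measurable_grad [measurable]: "F' \<in> borel_measurable borel"
proof -
  have "L-lipschitz_on UNIV F'"
    using L_pos by (intro lipschitz_onI) (auto simp: dist_norm grad_lipschitz)
  then show ?thesis
    by (intro borel_measurable_continuous_onI lipschitz_on_continuous_on)
qed

lemma inner_grad_ge: "(v - wstar) \<bullet> F' y \<ge> \<mu> / 2 * (norm (y - wstar))^2 - L / 2 * (norm (v - y))^2"
proof -
  have "F wstar \<le> F v" by (rule minimizer)
  moreover have "F v \<le> F y + (v - y) \<bullet> F' y + L / 2 * (norm (v - y))^2" by (rule smooth)
  moreover have "F wstar \<ge> F y + (wstar - y) \<bullet> F' y + \<mu> / 2 * (norm (wstar - y))^2"
    by (rule strongly_convex)
  ultimately show ?thesis
    by (simp add: inner_diff_left norm_minus_commute algebra_simps)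
qed

text \<open>The averaged point plays the role of \<open>v\<close> for every worker; Jensen's inequality then moves the
  strong convexity term from the workers to their average.\<close>
lemma avg_inner_grad_ge:
  fixes y :: "'i \<Rightarrow> 'a"
  assumes "finite I" "I \<noteq> {}"
  defines "yb \<equiv> (1 / real (card I)) *\<^sub>R (\<Sum>i\<in>I. y i)"
  shows "(1 / real (card I)) * (\<Sum>i\<in>I. (yb - wstar) \<bullet> F' (y i))
           \<ge> \<mu> / 2 * (norm (yb - wstar))^2 - L / 2 * ((1 / real (card I)) * (\<Sum>i\<in>I. (norm (yb - y i))^2))"
proof -
  define c where "c = 1 / real (card I)"
  have c: "c \<ge> 0" by (simp add: c_def)
  have "\<mu> / 2 * (norm (yb - wstar))^2 \<le> \<mu> / 2 * (c * (\<Sum>i\<in>I. (norm (y i - wstar))^2))"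
    using mult_left_mono[OF norm_avg_diff_sq_le[OF assms(1,2), of y wstar], of "\<mu> / 2"] mu_pos
    by (simp add: yb_def c_def)
  also have "\<dots> = c * (\<Sum>i\<in>I. \<mu> / 2 * (norm (y i - wstar))^2 - L / 2 * (norm (yb - y i))^2)
                 + L / 2 * (c * (\<Sum>i\<in>I. (norm (yb - y i))^2))"
    by (simp add: sum_subtractf sum_distrib_left algebra_simps)
  also have "\<dots> \<le> c * (\<Sum>i\<in>I. (yb - wstar) \<bullet> F' (y i)) + L / 2 * (c * (\<Sum>i\<in>I. (norm (yb - y i))^2))"
    using c by (intro add_right_mono mult_left_mono sum_mono inner_grad_ge)
  finally show ?thesis unfolding c_def by linarith
qed

end

section \<open>Square-integrable random vectors\<close>

definition square_integrable :: "'p measure \<Rightarrow> ('p \<Rightarrow> 'c::euclidean_space) \<Rightarrow> bool" where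
  "square_integrable M X \<longleftrightarrow> X \<in> borel_measurable M \<and> integrable M (\<lambda>\<omega>. (norm (X \<omega>))^2)"

lemma integrable_of_square_integrable_bound:
  fixes f :: "'p \<Rightarrow> real"
  assumes "square_integrable M X" "square_integrable M Y" "f \<in> borel_measurable M"
    and "\<And>\<omega>. \<bar>f \<omega>\<bar> \<le> norm (X \<omega>) * norm (Y \<omega>)"
  shows "integrable M f"
proof (rule Bochner_Integration.integrable_bound)
  show "integrable M (\<lambda>\<omega>. (norm (X \<omega>))^2 + (norm (Y \<omega>))^2)"
    using assms(1,2) by (simp add: square_integrable_def)
  show "AE \<omega> in M. norm (f \<omega>) \<le> norm ((norm (X \<omega>))^2 + (norm (Y \<omega>))^2)"
  proof (rule AE_I2)
    fix \<omega>
    have "\<bar>f \<omega>\<bar> \<le> (norm (X \<omega>))^2 + (norm (Y \<omega>))^2"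
      using assms(4)[of \<omega>] sum_squares_bound[of "norm (X \<omega>)" "norm (Y \<omega>)"]
        mult_nonneg_nonneg[OF norm_ge_zero norm_ge_zero, of "X \<omega>" "Y \<omega>"] by linarith
    then show "norm (f \<omega>) \<le> norm ((norm (X \<omega>))^2 + (norm (Y \<omega>))^2)" by simp
  qed
qed (use assms(3) in simp)

lemma integrable_inner_square_integrable:
  "square_integrable M X \<Longrightarrow> square_integrable M Y \<Longrightarrow> integrable M (\<lambda>\<omega>. X \<omega> \<bullet> Y \<omega>)"
  by (rule integrable_of_square_integrable_bound[where X=X and Y=Y])
    (auto simp: square_integrable_def intro: Cauchy_Schwarz_ineq2)

lemma integrable_norm_sq_square_integrable:
  "square_integrable M X \<Longrightarrow> integrable M (\<lambda>\<omega>. (norm (X \<omega>))^2)"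
  by (simp add: square_integrable_def)

lemma square_integrable_add:
  assumes "square_integrable M X" "square_integrable M Y"
  shows "square_integrable M (\<lambda>\<omega>. X \<omega> + Y \<omega>)"
proof -
  have [measurable]: "X \<in> borel_measurable M" "Y \<in> borel_measurable M"
    using assms by (auto simp: square_integrable_def)
  have "integrable M (\<lambda>\<omega>. 2 * (norm (X \<omega>))^2 + 2 * (norm (Y \<omega>))^2)"
    using assms by (auto simp: square_integrable_def)
  then have "integrable M (\<lambda>\<omega>. (norm (X \<omega> + Y \<omega>))^2)"
    by (rule Bochner_Integration.integrable_bound) (auto intro: norm_add_sq_le)
  then show ?thesis by (simp add: square_integrable_def)
qed

lemma square_integrable_scaleR:
  "square_integrable M X \<Longrightarrow> square_integrable M (\<lambda>\<omega>. c *\<^sub>R X \<omega>)"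
  by (auto simp: square_integrable_def power_mult_distrib)

lemma square_integrable_diff:
  assumes "square_integrable M X" "square_integrable M Y"
  shows "square_integrable M (\<lambda>\<omega>. X \<omega> - Y \<omega>)"
  using square_integrable_add[OF assms(1) square_integrable_scaleR[OF assms(2), of "-1"]] by simp

lemma (in finite_measure) square_integrable_const: "square_integrable M (\<lambda>\<omega>. c)"
  by (simp add: square_integrable_def)

lemma (in finite_measure) square_integrable_sum:
  "(\<And>i. i \<in> I \<Longrightarrow> square_integrable M (X i)) \<Longrightarrow> square_integrable M (\<lambda>\<omega>. \<Sum>i\<in>I. X i \<omega>)"
proof (induction I rule: infinite_finite_induct)
  case (insert i I)
  then show ?case by (simp add: square_integrable_add)
qed (simp_all add: square_integrable_const)

section \<open>The stochastic process\<close>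

locale ds_sync =
  ds_scheme N g eta w0 xi + smooth_strongly_convex F F' L \<mu> wstar + prob_space M
  for N and g :: "'a::euclidean_space \<Rightarrow> 'b \<Rightarrow> 'a" and eta w0 and xi :: "nat \<Rightarrow> nat \<Rightarrow> 'p \<Rightarrow> 'b"
    and F F' L \<mu> wstar and M :: "'p measure" +
  fixes S :: "'b measure" and G :: real
  assumes xi_measurable: "\<And>t m. m < N^2 \<Longrightarrow> xi t m \<in> measurable M S"
    and g_measurable: "(\<lambda>(w, z). g w z) \<in> borel_measurable (borel \<Otimes>\<^sub>M S)"
    and eta_nonneg: "\<And>t. eta t \<ge> 0"
    and unbiased: "\<And>t m b. m < N^2 \<Longrightarrow> b \<in> Basis \<Longrightarrow>
       AE \<omega> in M. real_cond_exp M (ds_filt M S N xi t) (\<lambda>\<omega>. sgrad t m \<omega> \<bullet> b) \<omega> = F' (w t m \<omega>) \<bullet> b"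
    and second_moment: "\<And>t m. m < N^2 \<Longrightarrow>
       (\<integral>\<^sup>+ \<omega>. ennreal ((norm (sgrad t m \<omega>))^2) \<partial>M) \<le> ennreal (G^2)"
begin

abbreviation "Ft t \<equiv> ds_filt M S N xi t"

lemma sets_Ft:
  "sets (Ft t) = sigma_sets (space M) (\<Union>s<t. \<Union>m<N^2. {xi s m -` A \<inter> space M | A. A \<in> sets S})"
  unfolding ds_filt_def by (rule sets_measure_of) auto

lemma space_Ft [simp]: "space (Ft t) = space M"
  by (simp add: ds_filt_def space_measure_of_conv)

lemma subalgebra_Ft: "subalgebra M (Ft t)"
proof -
  have "(\<Union>s<t. \<Union>m<N^2. {xi s m -` A \<inter> space M | A. A \<in> sets S}) \<subseteq> sets M"
    using xi_measurable by (auto intro: measurable_sets)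
  then show ?thesis
    unfolding subalgebra_def using sets.sigma_sets_subset by (simp add: sets_Ft)
qed

lemma subalgebra_Ft_mono: "s \<le> t \<Longrightarrow> subalgebra (Ft t) (Ft s)"
  unfolding subalgebra_def sets_Ft
  using order_less_le_trans by (fastforce intro!: sigma_sets_mono')

lemma finite_measure_subalgebra_Ft: "finite_measure_subalgebra M (Ft t)"
  by unfold_locales (rule subalgebra_Ft)

lemma xi_measurable_Ft:
  assumes "s < t" "m < N^2" shows "xi s m \<in> measurable (Ft t) S"
proof (rule measurableI)
  fix \<omega> assume "\<omega> \<in> space (Ft t)"
  then show "xi s m \<omega> \<in> space S" using measurable_space[OF xi_measurable[OF assms(2)]] by simp
next
  fix A assume "A \<in> sets S"
  then have "xi s m -` A \<inter> space M \<in> (\<Union>s<t. \<Union>m<N^2. {xi s m -` A \<inter> space M | A. A \<in> sets S})"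
    using assms by blast
  then show "xi s m -` A \<inter> space (Ft t) \<in> sets (Ft t)"
    unfolding sets_Ft space_Ft by (rule sigma_sets.Basic)
qed

lemma sgrad_measurable_of:
  assumes "m < N^2" "w t m \<in> borel_measurable K" "xi t m \<in> measurable K S"
  shows "(\<lambda>\<omega>. sgrad t m \<omega>) \<in> borel_measurable K"
  using measurable_compose[OF measurable_Pair[OF assms(2,3)] g_measurable] by simp

lemma w_measurable_Ft: "w t m \<in> borel_measurable (Ft t)"
proof (induction t arbitrary: m)
  case 0
  have "w 0 m = (\<lambda>_. w0)" by (simp add: fun_eq_iff)
  then show ?case by simp
next
  case (Suc t)
  have step: "(\<lambda>\<omega>. w t j \<omega> - eta t *\<^sub>R sgrad t j \<omega>) \<in> borel_measurable (Ft (Suc t))"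
    if "j \<in> ds_block N t m" for j
proof -
    have j: "j < N^2" using that ds_block_subset by blast
    have "w t j \<in> borel_measurable (Ft (Suc t))"
      by (rule measurable_from_subalg[OF subalgebra_Ft_mono Suc.IH]) simp
    moreover have "xi t j \<in> measurable (Ft (Suc t)) S" by (rule xi_measurable_Ft[OF _ j]) simp
    ultimately show ?thesis using sgrad_measurable_of[OF j] by measurable
  qed
  show ?case
    by (simp only: ds_iter.simps) (intro borel_measurable_scaleR borel_measurable_const borel_measurable_sum step)
qed

lemma w_measurable [measurable]: "w t m \<in> borel_measurable M"
  by (rule measurable_from_subalg[OF subalgebra_Ft w_measurable_Ft])

lemma sgrad_measurable [measurable]: "m < N^2 \<Longrightarrow> (\<lambda>\<omega>. sgrad t m \<omega>) \<in> borel_measurable M"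
  by (rule sgrad_measurable_of) (auto intro: xi_measurable)

lemma sgrad_second_moment:
  assumes "m < N^2"
  shows "integrable M (\<lambda>\<omega>. (norm (sgrad t m \<omega>))^2)"
    and "(\<integral>\<omega>. (norm (sgrad t m \<omega>))^2 \<partial>M) \<le> G^2"
proof -
  have "(\<integral>\<^sup>+ \<omega>. ennreal ((norm (sgrad t m \<omega>))^2) \<partial>M) < \<infinity>"
    using le_less_trans[OF second_moment[OF assms, of t] ennreal_less_top] by simp
  then show int: "integrable M (\<lambda>\<omega>. (norm (sgrad t m \<omega>))^2)"
    using assms by (intro integrableI_bounded) simp_all
  have "ennreal (\<integral>\<omega>. (norm (sgrad t m \<omega>))^2 \<partial>M) = (\<integral>\<^sup>+ \<omega>. ennreal ((norm (sgrad t m \<omega>))^2) \<partial>M)"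
    by (rule nn_integral_eq_integral[OF int, symmetric]) simp
  also have "\<dots> \<le> ennreal (G^2)" by (rule second_moment[OF assms])
  finally show "(\<integral>\<omega>. (norm (sgrad t m \<omega>))^2 \<partial>M) \<le> G^2"
    by (simp add: ennreal_le_iff)
qed

lemma square_integrable_sgrad: "m < N^2 \<Longrightarrow> square_integrable M (\<lambda>\<omega>. sgrad t m \<omega>)"
  by (simp add: square_integrable_def sgrad_second_moment)

lemma square_integrable_w: "square_integrable M (w t m)"
proof (induction t arbitrary: m)
  case 0
  have "w 0 m = (\<lambda>_. w0)" by (simp add: fun_eq_iff)
  then show ?case by (simp add: square_integrable_const)
next
  case (Suc t)
  have "square_integrable M (\<lambda>\<omega>. (1 / real N) *\<^sub>R (\<Sum>j\<in>ds_block N t m. w t j \<omega> - eta t *\<^sub>R sgrad t j \<omega>))"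
    using ds_block_subset
    by (intro square_integrable_scaleR square_integrable_sum square_integrable_diff Suc.IH
        square_integrable_sgrad) auto
  then show ?case by (simp only: ds_iter.simps)
qed

lemma square_integrable_grad_comp:
  assumes "square_integrable M X" shows "square_integrable M (\<lambda>\<omega>. F' (X \<omega>))"
proof -
  have [measurable]: "X \<in> borel_measurable M" using assms by (simp add: square_integrable_def)
  have "integrable M (\<lambda>\<omega>. L^2 * (norm (X \<omega> - wstar))^2)"
    using square_integrable_diff[OF assms square_integrable_const]
    by (simp add: integrable_norm_sq_square_integrable)
  then have "integrable M (\<lambda>\<omega>. (norm (F' (X \<omega>)))^2)"
  proof (rule Bochner_Integration.integrable_bound)
    show "AE \<omega> in M. norm ((norm (F' (X \<omega>)))^2) \<le> norm (L^2 * (norm (X \<omega> - wstar))^2)"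
      using norm_grad_le by (auto simp: power_mult_distrib[symmetric] intro!: power_mono)
  qed simp
  then show ?thesis by (simp add: square_integrable_def)
qed

lemma integral_mult_sgrad_component:
  assumes f: "f \<in> borel_measurable (Ft t)" and int: "integrable M (\<lambda>\<omega>. f \<omega> * (sgrad t m \<omega> \<bullet> b))"
    and "m < N^2" "b \<in> Basis"
  shows "(\<integral>\<omega>. f \<omega> * (sgrad t m \<omega> \<bullet> b) \<partial>M) = (\<integral>\<omega>. f \<omega> * (F' (w t m \<omega>) \<bullet> b) \<partial>M)"
proof -
  interpret sigma_finite_subalgebra M "Ft t"
    using finite_measure_subalgebra_Ft finite_measure_subalgebra_is_sigma_finite by blast
  have [measurable]: "f \<in> borel_measurable M" by (rule measurable_from_subalg[OF subalg f])
  have "(\<integral>\<omega>. f \<omega> * (sgrad t m \<omega> \<bullet> b) \<partial>M)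
      = (\<integral>\<omega>. f \<omega> * real_cond_exp M (Ft t) (\<lambda>\<omega>. sgrad t m \<omega> \<bullet> b) \<omega> \<partial>M)"
    using assms by (intro real_cond_exp_intg(2)[symmetric]) simp_all
  also have "\<dots> = (\<integral>\<omega>. f \<omega> * (F' (w t m \<omega>) \<bullet> b) \<partial>M)"
  proof (rule integral_cong_AE)
    show "AE \<omega> in M. f \<omega> * real_cond_exp M (Ft t) (\<lambda>\<omega>. sgrad t m \<omega> \<bullet> b) \<omega>
                      = f \<omega> * (F' (w t m \<omega>) \<bullet> b)"
      using unbiased[OF assms(3,4), of t] by eventually_elim simp
  qed (use assms(3) in simp_all)
  finally show ?thesis .
qed

lemma integral_inner_sgrad:
  assumes X: "X \<in> borel_measurable (Ft t)" "square_integrable M X" and m: "m < N^2"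
  shows "(\<integral>\<omega>. X \<omega> \<bullet> sgrad t m \<omega> \<partial>M) = (\<integral>\<omega>. X \<omega> \<bullet> F' (w t m \<omega>) \<partial>M)"
proof -
  have [measurable]: "X \<in> borel_measurable M" using X by (simp add: square_integrable_def)
  have component_int: "integrable M (\<lambda>\<omega>. (X \<omega> \<bullet> b) * (V \<omega> \<bullet> b))"
    if "square_integrable M V" "b \<in> Basis" for V b
  proof (rule integrable_of_square_integrable_bound[OF X(2) that(1)])
    have [measurable]: "V \<in> borel_measurable M" using that by (simp add: square_integrable_def)
    show "(\<lambda>\<omega>. (X \<omega> \<bullet> b) * (V \<omega> \<bullet> b)) \<in> borel_measurable M" by measurable
    show "\<bar>(X \<omega> \<bullet> b) * (V \<omega> \<bullet> b)\<bar> \<le> norm (X \<omega>) * norm (V \<omega>)" for \<omega>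
      unfolding abs_mult using that by (intro mult_mono) (auto simp: Basis_le_norm)
  qed
  note sg = square_integrable_sgrad[OF m] and fw = square_integrable_grad_comp[OF square_integrable_w]
  have "(\<integral>\<omega>. X \<omega> \<bullet> sgrad t m \<omega> \<partial>M) = (\<integral>\<omega>. (\<Sum>b\<in>Basis. (X \<omega> \<bullet> b) * (sgrad t m \<omega> \<bullet> b)) \<partial>M)"
    by (intro Bochner_Integration.integral_cong refl euclidean_inner)
  also have "\<dots> = (\<Sum>b\<in>Basis. \<integral>\<omega>. (X \<omega> \<bullet> b) * (sgrad t m \<omega> \<bullet> b) \<partial>M)"
    by (rule Bochner_Integration.integral_sum) (rule component_int[OF sg])
  also have "\<dots> = (\<Sum>b\<in>Basis. \<integral>\<omega>. (X \<omega> \<bullet> b) * (F' (w t m \<omega>) \<bullet> b) \<partial>M)"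
    using X(1) m by (intro sum.cong refl integral_mult_sgrad_component component_int[OF sg]) auto
  also have "\<dots> = (\<integral>\<omega>. (\<Sum>b\<in>Basis. (X \<omega> \<bullet> b) * (F' (w t m \<omega>) \<bullet> b)) \<partial>M)"
    by (rule Bochner_Integration.integral_sum[symmetric]) (rule component_int[OF fw])
  also have "\<dots> = (\<integral>\<omega>. X \<omega> \<bullet> F' (w t m \<omega>) \<partial>M)"
    by (intro Bochner_Integration.integral_cong refl euclidean_inner[symmetric])
  finally show ?thesis .
qed

lemma wavg_measurable_Ft: "wavg t \<in> borel_measurable (Ft t)"
  unfolding wavg_def[abs_def] using w_measurable_Ft by measurable

lemma square_integrable_wavg: "square_integrable M (wavg t)"
  unfolding wavg_def[abs_def] by (intro square_integrable_scaleR square_integrable_sum square_integrable_w)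

lemma square_integrable_gavg: "square_integrable M (gavg t)"
  unfolding gavg_def[abs_def]
  by (intro square_integrable_scaleR square_integrable_sum square_integrable_sgrad) simp

lemma square_integrable_wavg_diff: "square_integrable M (\<lambda>\<omega>. wavg t \<omega> - wstar)"
  by (intro square_integrable_diff square_integrable_wavg square_integrable_const)

lemma integrable_consensus: "integrable M (consensus t)"
  unfolding consensus_def[abs_def]
  by (intro integrable_mult_right Bochner_Integration.integrable_sum integrable_norm_sq_square_integrable
      square_integrable_diff square_integrable_wavg square_integrable_w)

lemma integrable_sgrad_sq_avg: "integrable M (sgrad_sq_avg t)"
  unfolding sgrad_sq_avg_def[abs_def]
  by (intro integrable_mult_right Bochner_Integration.integrable_sum sgrad_second_moment) simp

lemma integral_sgrad_sq_avg_le: "(\<integral>\<omega>. sgrad_sq_avg t \<omega> \<partial>M) \<le> G^2"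
proof -
  have "(\<integral>\<omega>. sgrad_sq_avg t \<omega> \<partial>M) = (1 / real (N^2)) * (\<Sum>m<N^2. \<integral>\<omega>. (norm (sgrad t m \<omega>))^2 \<partial>M)"
    by (simp add: sgrad_sq_avg_def Bochner_Integration.integral_sum sgrad_second_moment)
  also have "\<dots> \<le> (1 / real (N^2)) * (\<Sum>m<N^2. G^2)"
    by (intro mult_left_mono sum_mono sgrad_second_moment) auto
  also have "\<dots> = G^2" using N_pos by simp
  finally show ?thesis .
qed

lemma integral_norm_gavg_sq_le: "(\<integral>\<omega>. (norm (gavg t \<omega>))^2 \<partial>M) \<le> G^2"
  using integral_mono[OF integrable_norm_sq_square_integrable[OF square_integrable_gavg]
      integrable_sgrad_sq_avg norm_gavg_sq_le] integral_sgrad_sq_avg_le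
  by (rule order_trans)

lemma integral_consensus_Suc_le: "(\<integral>\<omega>. consensus (Suc t) \<omega> \<partial>M) \<le> 4 * (eta t)^2 * G^2"
proof -
  have "(\<integral>\<omega>. consensus (Suc t) \<omega> \<partial>M) \<le> (\<integral>\<omega>. 4 * (eta t)^2 * sgrad_sq_avg t \<omega> \<partial>M)"
    using integrable_consensus integrable_sgrad_sq_avg by (intro integral_mono consensus_Suc_le) auto
  also have "\<dots> \<le> 4 * (eta t)^2 * G^2"
    using integral_sgrad_sq_avg_le[of t] by (simp add: mult_left_mono)
  finally show ?thesis .
qed

lemma avg_inner_grad_w_ge:
  "(1 / real (N^2)) * (\<Sum>m<N^2. (wavg t \<omega> - wstar) \<bullet> F' (w t m \<omega>))
     \<ge> \<mu> / 2 * (norm (wavg t \<omega> - wstar))^2 - L / 2 * consensus t \<omega>"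
proof -
  have "0 \<in> {..<N^2}" using N_pos by simp
  then have "{..<N^2} \<noteq> {}" by blast
  then show ?thesis
    using avg_inner_grad_ge[of "{..<N^2}" "\<lambda>m. w t m \<omega>"] by (simp add: wavg_def consensus_def)
qed

lemma integral_inner_gavg_ge:
  "(\<integral>\<omega>. (wavg t \<omega> - wstar) \<bullet> gavg t \<omega> \<partial>M)
     \<ge> \<mu> / 2 * (\<integral>\<omega>. (norm (wavg t \<omega> - wstar))^2 \<partial>M) - L / 2 * (\<integral>\<omega>. consensus t \<omega> \<partial>M)"
proof -
  note X = square_integrable_wavg_diff[of t]
  have X_Ft: "(\<lambda>\<omega>. wavg t \<omega> - wstar) \<in> borel_measurable (Ft t)"
    using wavg_measurable_Ft by measurable
  have "(\<integral>\<omega>. (wavg t \<omega> - wstar) \<bullet> gavg t \<omega> \<partial>M)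
      = (1 / real (N^2)) * (\<Sum>m<N^2. \<integral>\<omega>. (wavg t \<omega> - wstar) \<bullet> sgrad t m \<omega> \<partial>M)"
    by (simp add: gavg_def inner_sum_right Bochner_Integration.integral_sum
        integrable_inner_square_integrable[OF X] square_integrable_sgrad)
  also have "\<dots> = (1 / real (N^2)) * (\<Sum>m<N^2. \<integral>\<omega>. (wavg t \<omega> - wstar) \<bullet> F' (w t m \<omega>) \<partial>M)"
    by (simp add: integral_inner_sgrad[OF X_Ft X])
  also have "\<dots> = (\<integral>\<omega>. (1 / real (N^2)) * (\<Sum>m<N^2. (wavg t \<omega> - wstar) \<bullet> F' (w t m \<omega>)) \<partial>M)"
    by (simp add: Bochner_Integration.integral_sum integrable_inner_square_integrable[OF X]
        square_integrable_grad_comp square_integrable_w)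
  also have "\<dots> \<ge> (\<integral>\<omega>. \<mu> / 2 * (norm (wavg t \<omega> - wstar))^2 - L / 2 * consensus t \<omega> \<partial>M)"
    by (intro integral_mono avg_inner_grad_w_ge Bochner_Integration.integrable_diff integrable_mult_right
        integrable_norm_sq_square_integrable X integrable_consensus Bochner_Integration.integrable_sum
        integrable_inner_square_integrable square_integrable_grad_comp square_integrable_w)
  also have "(\<integral>\<omega>. \<mu> / 2 * (norm (wavg t \<omega> - wstar))^2 - L / 2 * consensus t \<omega> \<partial>M)
      = \<mu> / 2 * (\<integral>\<omega>. (norm (wavg t \<omega> - wstar))^2 \<partial>M) - L / 2 * (\<integral>\<omega>. consensus t \<omega> \<partial>M)"
    using integrable_norm_sq_square_integrable[OF X] integrable_consensus by simp
  finally show ?thesis .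
qed

lemma integral_dist_wavg_Suc_le:
  "(\<integral>\<omega>. (norm (wavg (Suc t) \<omega> - wstar))^2 \<partial>M)
     \<le> (1 - \<mu> * eta t) * (\<integral>\<omega>. (norm (wavg t \<omega> - wstar))^2 \<partial>M)
        + eta t * L * (\<integral>\<omega>. consensus t \<omega> \<partial>M) + (eta t)^2 * G^2"
proof -
  note X = square_integrable_wavg_diff[of t]
  have step: "(norm (wavg (Suc t) \<omega> - wstar))^2 = (norm (wavg t \<omega> - wstar))^2
      - 2 * eta t * ((wavg t \<omega> - wstar) \<bullet> gavg t \<omega>) + (eta t)^2 * (norm (gavg t \<omega>))^2" for \<omega>
proof -
    have "wavg (Suc t) \<omega> - wstar = (wavg t \<omega> - wstar) - eta t *\<^sub>R gavg t \<omega>"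
      by (simp add: wavg_Suc)
    then show ?thesis by (simp only: norm_diff_scaleR_sq)
  qed
  have "(\<integral>\<omega>. (norm (wavg (Suc t) \<omega> - wstar))^2 \<partial>M)
      = (\<integral>\<omega>. (norm (wavg t \<omega> - wstar))^2 - 2 * eta t * ((wavg t \<omega> - wstar) \<bullet> gavg t \<omega>)
            + (eta t)^2 * (norm (gavg t \<omega>))^2 \<partial>M)"
    by (simp only: step)
  also have "\<dots> = (\<integral>\<omega>. (norm (wavg t \<omega> - wstar))^2 \<partial>M)
      - 2 * eta t * (\<integral>\<omega>. (wavg t \<omega> - wstar) \<bullet> gavg t \<omega> \<partial>M)
      + (eta t)^2 * (\<integral>\<omega>. (norm (gavg t \<omega>))^2 \<partial>M)"
    using integrable_norm_sq_square_integrable[OF X] integrable_inner_square_integrable[OF X square_integrable_gavg]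
      integrable_norm_sq_square_integrable[OF square_integrable_gavg[of t]]
    by simp
  also have "\<dots> \<le> (1 - \<mu> * eta t) * (\<integral>\<omega>. (norm (wavg t \<omega> - wstar))^2 \<partial>M)
        + eta t * L * (\<integral>\<omega>. consensus t \<omega> \<partial>M) + (eta t)^2 * G^2"
    using mult_left_mono[OF integral_inner_gavg_ge[of t], of "2 * eta t"]
      mult_left_mono[OF integral_norm_gavg_sq_le[of t], of "(eta t)^2"] eta_nonneg[of t]
    by (simp add: algebra_simps)
  finally show ?thesis .
qed

end

section \<open>The convergence rate\<close>

lemma decay_recursion_step:
  fixes s C K x :: real
  assumes s: "s \<ge> 2" and K: "K \<ge> 0" and C: "32 * K \<le> C" and x: "x \<le> C / s"
  shows "(1 - 2 / s) * x + 20 * K / s^2 \<le> C / (s + 1)"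
proof -
  have s0: "s > 0" using s by simp
  have "(1 - 2 / s) * x \<le> (1 - 2 / s) * (C / s)"
    using s by (intro mult_left_mono[OF x]) (simp add: field_simps)
  also have "\<dots> = C * (s - 2) / s^2"
    using s0 by (simp add: field_simps power2_eq_square)
  finally have "(1 - 2 / s) * x + 20 * K / s^2 \<le> (C * (s - 2) + 20 * K) / s^2"
    by (simp add: add_divide_distrib)
  also have "\<dots> \<le> C / (s + 1)"
proof -
    have "20 * K * (s + 1) \<le> 32 * K * (s + 2)" using K s by (simp add: algebra_simps)
    also have "\<dots> \<le> C * (s + 2)" using C s by (intro mult_right_mono) auto
    finally have "(C * (s - 2) + 20 * K) * (s + 1) \<le> C * s^2"
      by (simp add: algebra_simps power2_eq_square)
    then show ?thesis using s0 by (simp add: field_simps)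
  qed
  finally show ?thesis .
qed

locale ds_sync_decaying = ds_sync +
  assumes eta_def: "eta = (\<lambda>t. 2 / (\<mu> * (max (8 * (L / \<mu>)) 2 + real t)))"
begin

abbreviation "\<gamma> \<equiv> max (8 * (L / \<mu>)) 2"

lemma gamma_eq: "\<gamma> = 8 * (L / \<mu>)"
proof -
  have "L / \<mu> \<ge> 1" using mu_le_L mu_pos by simp
  then show ?thesis by simp
qed

lemma eta_mult_L_le: "eta t * L \<le> 1 / 4"
proof -
  have "eta t * L = 2 * L / (\<mu> * (\<gamma> + real t))" by (simp add: eta_def)
  also have "\<dots> \<le> 2 * L / (\<mu> * \<gamma>)"
    using mu_pos L_pos by (intro divide_left_mono mult_left_mono mult_pos_pos) auto
  also have "\<dots> = 1 / 4" using mu_pos L_pos unfolding gamma_eq by simp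
  finally show ?thesis .
qed

lemma eta_le_twice_eta_Suc: "eta t \<le> 2 * eta (Suc t)"
proof -
  define s where "s = \<gamma> + real t"
  have s: "s \<ge> 1" by (simp add: s_def)
  have eta: "eta t = 2 / (\<mu> * s)" "eta (Suc t) = 2 / (\<mu> * (s + 1))"
    by (simp_all add: eta_def s_def algebra_simps)
  have "2 / (\<mu> * s) = 4 / (\<mu> * (2 * s))" by simp
  also have "\<dots> \<le> 4 / (\<mu> * (s + 1))"
    using mu_pos s by (intro divide_left_mono mult_left_mono mult_pos_pos) auto
  finally show ?thesis unfolding eta by simp
qed

text \<open>The consensus error created by the gossip step at \<open>t - 1\<close> is of order \<open>eta\<^sup>2\<close>; the
  schedule makes \<open>eta t * L\<close> small enough to absorb it.\<close>
lemma consensus_term_le: "eta t * L * (\<integral>\<omega>. consensus t \<omega> \<partial>M) \<le> 4 * (eta t)^2 * G^2"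
proof (cases t)
  case 0
  then show ?thesis by (simp add: consensus_0)
next
  case (Suc s)
  have "(\<integral>\<omega>. consensus t \<omega> \<partial>M) \<le> 4 * (eta s)^2 * G^2"
    using integral_consensus_Suc_le Suc by simp
  also have "\<dots> \<le> 4 * (2 * eta t)^2 * G^2"
    using eta_le_twice_eta_Suc[of s] eta_nonneg[of s] Suc
    by (intro mult_right_mono mult_left_mono power_mono) auto
  finally have "eta t * L * (\<integral>\<omega>. consensus t \<omega> \<partial>M) \<le> (eta t * L) * (16 * (eta t)^2 * G^2)"
    using eta_nonneg[of t] L_pos by (intro mult_left_mono) (auto simp: power_mult_distrib)
  also have "\<dots> \<le> 1 / 4 * (16 * (eta t)^2 * G^2)"
    using eta_mult_L_le by (intro mult_right_mono) auto
  finally show ?thesis by (simp add: ac_simps)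
qed

lemma integral_dist_wavg_le:
  assumes B: "B \<ge> 8 * G^2"
  shows "(\<integral>\<omega>. (norm (wavg t \<omega> - wstar))^2 \<partial>M)
           \<le> (4 * B / \<mu>^2 + 8 * (L / \<mu>) * (norm (w0 - wstar))^2) / (\<gamma> + real t)"
proof (induction t)
  case 0
  have "(norm (w0 - wstar))^2 = 8 * (L / \<mu>) * (norm (w0 - wstar))^2 / \<gamma>"
    using gamma_eq mu_pos L_pos by simp
  also have "\<dots> \<le> (4 * B / \<mu>^2 + 8 * (L / \<mu>) * (norm (w0 - wstar))^2) / \<gamma>"
proof -
    have "B \<ge> 0" using B zero_le_power2[of G] by linarith
    then show ?thesis by (intro divide_right_mono) auto
  qed
  finally show ?case by (simp add: wavg_0 prob_space)
next
  case (Suc t)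
  define s where "s = \<gamma> + real t"
  have s: "s \<ge> 2" by (simp add: s_def)
  have eta: "eta t = 2 / (\<mu> * s)" by (simp add: eta_def s_def)
  have "(\<integral>\<omega>. (norm (wavg (Suc t) \<omega> - wstar))^2 \<partial>M)
      \<le> (1 - 2 / s) * (\<integral>\<omega>. (norm (wavg t \<omega> - wstar))^2 \<partial>M) + 5 * (eta t)^2 * G^2"
    using integral_dist_wavg_Suc_le[of t] consensus_term_le[of t] mu_pos by (simp add: eta)
  also have "5 * (eta t)^2 * G^2 = 20 * (G^2 / \<mu>^2) / s^2"
    using mu_pos s by (simp add: eta field_simps power2_eq_square)
  also have "(1 - 2 / s) * (\<integral>\<omega>. (norm (wavg t \<omega> - wstar))^2 \<partial>M) + 20 * (G^2 / \<mu>^2) / s^2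
      \<le> (4 * B / \<mu>^2 + 8 * (L / \<mu>) * (norm (w0 - wstar))^2) / (s + 1)"
  proof (rule decay_recursion_step[OF s])
    have "32 * (G^2 / \<mu>^2) \<le> 4 * B / \<mu>^2" using B mu_pos by (simp add: field_simps)
    also have "\<dots> \<le> 4 * B / \<mu>^2 + 8 * (L / \<mu>) * (norm (w0 - wstar))^2" using L_pos mu_pos by simp
    finally show "32 * (G^2 / \<mu>^2) \<le> \<dots>" .
  qed (use Suc.IH in \<open>simp_all add: s_def\<close>)
  finally show ?case by (simp add: s_def add.assoc add.commute)
qed

lemma expected_suboptimality_le:
  assumes "m < N^2" and "B \<ge> 8 * G^2"
  shows "(\<integral>\<^sup>+ \<omega>. ennreal (F ((1 / real N) *\<^sub>R (\<Sum>k\<in>ds_block N t m. w t k \<omega>)) - F wstar) \<partial>M)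
           \<le> ennreal (2 * (L / \<mu>) / (\<gamma> + real t) * (B / \<mu> + 2 * L * (norm (w0 - wstar))^2))"
proof -
  have int: "integrable M (\<lambda>\<omega>. L / 2 * (norm (wavg t \<omega> - wstar))^2)"
    using integrable_norm_sq_square_integrable[OF square_integrable_wavg_diff] by simp
  have "(\<integral>\<^sup>+ \<omega>. ennreal (F ((1 / real N) *\<^sub>R (\<Sum>k\<in>ds_block N t m. w t k \<omega>)) - F wstar) \<partial>M)
      \<le> (\<integral>\<^sup>+ \<omega>. ennreal (L / 2 * (norm (wavg t \<omega> - wstar))^2) \<partial>M)"
    by (intro nn_integral_mono ennreal_leI) (simp only: block_avg_eq_wavg[OF assms(1)] suboptimality_le)
  also have "\<dots> = ennreal (L / 2 * (\<integral>\<omega>. (norm (wavg t \<omega> - wstar))^2 \<partial>M))"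
    using nn_integral_eq_integral[OF int] L_pos by simp
  also have "\<dots> \<le> ennreal (L / 2 * ((4 * B / \<mu>^2 + 8 * (L / \<mu>) * (norm (w0 - wstar))^2) / (\<gamma> + real t)))"
    using integral_dist_wavg_le[OF assms(2), of t] L_pos by (intro ennreal_leI mult_left_mono) auto
  also have "\<dots> = ennreal (2 * (L / \<mu>) / (\<gamma> + real t) * (B / \<mu> + 2 * L * (norm (w0 - wstar))^2))"
  proof -
    have eq: "L / 2 * ((4 * B / \<mu>^2 + 8 * (L / \<mu>) * (norm (w0 - wstar))^2) / x)
        = 2 * (L / \<mu>) / x * (B / \<mu> + 2 * L * (norm (w0 - wstar))^2)" if "x > 0" for x
      using mu_pos that by (simp add: field_simps power2_eq_square)
    have "\<gamma> + real t > 0" by simp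
    then show ?thesis by (simp only: eq)
  qed
  finally show ?thesis .
qed

end

theorem theoremA4:
  fixes M :: "'p measure" and S :: "'b measure"
    and F :: "'a::euclidean_space \<Rightarrow> real" and F' :: "'a \<Rightarrow> 'a"
    and g :: "'a \<Rightarrow> 'b \<Rightarrow> 'a"
    and xi :: "nat \<Rightarrow> nat \<Rightarrow> 'p \<Rightarrow> 'b"
    and N :: nat and w0 wstar :: 'a and L \<mu> \<sigma> G :: real
  assumes prob: "prob_space M"
    and N_pos: "N \<ge> 1"
    and xi_meas: "\<And>t m. m < N^2 \<Longrightarrow> xi t m \<in> measurable M S"
    and g_meas: "(\<lambda>(w, z). g w z) \<in> borel_measurable (borel \<Otimes>\<^sub>M S)"
    and grad: "\<And>w. (F has_derivative (\<lambda>h. F' w \<bullet> h)) (at w)"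
    and smooth: "\<And>v w. F v \<le> F w + (v - w) \<bullet> F' w + L / 2 * (norm (v - w))^2"
    and mu_pos: "\<mu> > 0"
    and strconv: "\<And>v w. F v \<ge> F w + (v - w) \<bullet> F' w + \<mu> / 2 * (norm (v - w))^2"
    and minimizer: "\<And>w. F wstar \<le> F w"
    and cindep: "\<And>t. cond_indep_vars M (ds_filt M S N xi t) S {..<N^2} (xi t)"
    and unbiased: "\<And>t m b. m < N^2 \<Longrightarrow> b \<in> Basis \<Longrightarrow>
       (let w = ds_iter N g (\<lambda>t. 2 / (\<mu> * (max (8 * (L / \<mu>)) 2 + real t))) w0 xi t m in
        AE \<omega> in M. real_cond_exp M (ds_filt M S N xi t) (\<lambda>\<omega>. g (w \<omega>) (xi t m \<omega>) \<bullet> b) \<omega>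
                   = F' (w \<omega>) \<bullet> b)"
    and variance: "\<And>t m. m < N^2 \<Longrightarrow>
       (let w = ds_iter N g (\<lambda>t. 2 / (\<mu> * (max (8 * (L / \<mu>)) 2 + real t))) w0 xi t m in
        (\<integral>\<^sup>+ \<omega>. ennreal ((norm (g (w \<omega>) (xi t m \<omega>) - F' (w \<omega>)))^2) \<partial>M) \<le> ennreal (\<sigma>^2))"
    and second_moment: "\<And>t m. m < N^2 \<Longrightarrow>
       (let w = ds_iter N g (\<lambda>t. 2 / (\<mu> * (max (8 * (L / \<mu>)) 2 + real t))) w0 xi t m in
        (\<integral>\<^sup>+ \<omega>. ennreal ((norm (g (w \<omega>) (xi t m \<omega>)))^2) \<partial>M) \<le> ennreal (G^2))"
  shows "\<forall>t m. m < N^2 \<longrightarrow>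
     (let \<kappa> = L / \<mu>; \<gamma> = max (8 * \<kappa>) 2;
          w = ds_iter N g (\<lambda>t. 2 / (\<mu> * (\<gamma> + real t))) w0 xi;
          wbar = (\<lambda>\<omega>. (1 / real N) *\<^sub>R (\<Sum>k\<in>ds_block N t m. w t k \<omega>));
          B = \<sigma>^2 / real N + 8 * G^2
      in (\<integral>\<^sup>+ \<omega>. ennreal (F (wbar \<omega>) - F wstar) \<partial>M)
           \<le> ennreal (2 * \<kappa> / (\<gamma> + real t) * (B / \<mu> + 2 * L * (norm (w0 - wstar))^2)))"
proof -
  define eta where "eta = (\<lambda>t. 2 / (\<mu> * (max (8 * (L / \<mu>)) 2 + real t)))"
  have eta_nonneg: "eta t \<ge> 0" for t
    using mu_pos by (simp add: eta_def add_pos_nonneg)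
  interpret prob_space M by (rule prob)
  interpret ds_sync_decaying N g eta w0 xi F F' L \<mu> wstar M S G
    using eta_nonneg N_pos xi_meas g_meas smooth mu_pos strconv minimizer unbiased second_moment
    by unfold_locales (simp_all add: eta_def Let_def emeasure_space_1)
  have "8 * G^2 \<le> \<sigma>^2 / real N + 8 * G^2" by simp
  then show ?thesis
    using expected_suboptimality_le by (simp add: Let_def eta_def)
qed

end
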